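(* Let $\Omega_1=\{(u,v)\in\mathbb{C}^2: |u^2|+|v^2|-1<|u^2+v^2-1|\}$. Then $\{1-u^2-v^2:(u,v)\in\Omega_1\}\subset\mathbb{C}-(-\infty,0]$. *)

theory Defs
  imports "HOL-Analysis.Analysis"
begin

definition Omega1 :: "(complex \<times> complex) set" where
  "Omega1 = {(u, v). cmod (u\<^sup>2) + cmod (v\<^sup>2) - 1 < cmod (u\<^sup>2 + v\<^sup>2 - 1)}"

end

theory Submission
  imports Defs
begin

lemma norm_add_minus_one_le_if_one_minus_nonpos_real:
  fixes a b :: "'a::real_normed_algebra_1"
  assumes "1 - a - b = of_real r" and "r \<le> 0"
  shows "norm (a + b - 1) \<le> norm a + norm b - 1"
proof -
  have "a + b - 1 = of_real (- r)" and "a + b = of_real (1 - r)"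
    using assms(1) by (simp_all add: algebra_simps)
  then have "norm (a + b - 1) = \<bar>r\<bar>" and "norm (a + b) = \<bar>1 - r\<bar>"
    by (simp_all only: norm_of_real abs_minus_cancel)
  with norm_triangle_ineq[of a b] assms(2) show ?thesis by linarith
qed

theorem lemma4p5:
  shows "(\<lambda>(u, v). 1 - u\<^sup>2 - v\<^sup>2) ` Omega1 \<subseteq> UNIV - complex_of_real ` {..0}"
proof (intro subsetI DiffI UNIV_I notI)
  fix z assume "z \<in> (\<lambda>(u, v). 1 - u\<^sup>2 - v\<^sup>2) ` Omega1" and "z \<in> complex_of_real ` {..0}"
  then obtain u v r where "(u, v) \<in> Omega1" and "r \<le> 0" and "1 - u\<^sup>2 - v\<^sup>2 = complex_of_real r"
    by auto
  then show False
    using norm_add_minus_one_le_if_one_minus_nonpos_real[of "u\<^sup>2" "v\<^sup>2" r]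
    by (simp add: Omega1_def)
qed

end
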